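(* In the setting below, suppose that the function $x\mapsto f(x)+g(Ax)$ is bounded below on $\mathbb R^n$ (equivalently, $F(x)=f(x)+g(Ax)+\Phi_{+,\lambda}(Bx-b)$ is bounded below) and that $\{x:\ x\in\operatorname{ri}(\operatorname{dom}f),\ Ax\in\operatorname{ri}(\operatorname{dom}g),\ Bx\le b\}\neq\emptyset$, where "$\operatorname{ri}$" may be omitted for $f$ (resp. $g$) if $f$ (resp. $g$) is polyhedral. Then for every $\mu>0$ the problem $\inf_{w=[y;z]}\ \Xi(w)+\Psi_{+,\mu}(z)$ has a global minimizer.
   Context: Let $f:\mathbb R^n\to(-\infty,\infty]$ and $g:\mathbb R^m\to(-\infty,\infty]$ be proper, lsc and convex, with convex conjugates $f^*(q)=\sup_x\{\langle q,x\rangle-f(x)\}$, $g^*$. Let $A\in\mathbb R^{m\times n}$, $B\in\mathbb R^{r\times n}$, $b\in\mathbb R^r$, $\lambda,\mu\in\mathbb R^r$ with $\lambda,\mu>0$. $\Phi_{+,\lambda}(u)=\sum_i\lambda_i\mathbf 1_{\{u_i>0\}}$. For $w=[y;z]\in\mathbb R^m\times\mathbb R^r$, $\Xi(w):=f^*(-A^\top y-B^\top z)+g^*(y)+\langle b,z\rangle$. $\Psi_{+,\mu}(z)=\sum_{i=1}^r\mu_i\mathbf 1_{\{z_i\ne0\}}+\delta(z\mid\mathbb R^r_+)$. $\operatorname{ri}$ denotes relative interior. *)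

theory Defs
  imports "HOL-Analysis.Analysis"
begin

definition edom :: "('a \<Rightarrow> ereal) \<Rightarrow> 'a set" where
  "edom f = {x. f x < \<infinity>}"

definition epigraph_e :: "('a \<Rightarrow> ereal) \<Rightarrow> ('a \<times> real) set" where
  "epigraph_e f = {(x, t). f x \<le> ereal t}"

definition proper_fun :: "('a \<Rightarrow> ereal) \<Rightarrow> bool" where
  "proper_fun f \<longleftrightarrow> (\<forall>x. f x \<noteq> -\<infinity>) \<and> (\<exists>x. f x \<noteq> \<infinity>)"

definition convex_fun :: "('a::real_vector \<Rightarrow> ereal) \<Rightarrow> bool" where
  "convex_fun f \<longleftrightarrow> convex (epigraph_e f)"

definition lsc_fun :: "('a::topological_space \<Rightarrow> ereal) \<Rightarrow> bool" where
  "lsc_fun f \<longleftrightarrow> (\<forall>c. closed {x. f x \<le> c})"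

definition polyhedral_fun :: "('a::euclidean_space \<Rightarrow> ereal) \<Rightarrow> bool" where
  "polyhedral_fun f \<longleftrightarrow> polyhedron (epigraph_e f)"

definition conj_fun :: "('a::real_inner \<Rightarrow> ereal) \<Rightarrow> 'a \<Rightarrow> ereal" where
  "conj_fun f q = (SUP x. ereal (q \<bullet> x) - f x)"

definition Xi_fun ::
  "(real^'n \<Rightarrow> ereal) \<Rightarrow> (real^'m \<Rightarrow> ereal) \<Rightarrow> real^'n^'m \<Rightarrow> real^'n^'r \<Rightarrow> real^'r
     \<Rightarrow> real^'m \<Rightarrow> real^'r \<Rightarrow> ereal" where
  "Xi_fun f g A B b y z =
     conj_fun f (- (transpose A *v y) - (transpose B *v z)) + conj_fun g y + ereal (b \<bullet> z)"

definition Psi_plus :: "real^'r \<Rightarrow> real^'r \<Rightarrow> ereal" where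
  "Psi_plus \<mu> z =
     ereal (\<Sum>i\<in>UNIV. if z $ i \<noteq> 0 then \<mu> $ i else 0)
     + (if (\<forall>i. 0 \<le> z $ i) then 0 else \<infinity>)"

end

theory Submission
  imports Defs
begin

(* For a set S of constraint indices let v(S) be the infimum of f x + g (A x) subject to
   (B x)_i <= b_i for i in S, and write mu(S) for the sum of the mu_i over S. The dual objective
   Xi (y, z) is minus the infimum over (x, u) of the Lagrangian
   f x + g u + <y, A x - u> + <z, B x - b>, so weak duality gives Xi (y, z) >= - v(S) whenever
   z >= 0 vanishes outside S. Conversely the constraint qualification yields Lagrange multipliers
   for the problem restricted to S, i.e. such a (y, z) with Xi (y, z) <= - v(S); they come from
   separating the epigraph from the feasible set, followed by Farkas' lemma for the linear
   constraints, and a polyhedral f or g is handled as a polyhedral constraint on its epigraph.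
   Since Psi (z) = mu(supp z) for z >= 0, the objective is at least mu(S) - v(S) at every point
   with supp z = S, and at most mu(S) - v(S) at the multipliers for S. Hence the multipliers for a
   set S0 minimising the finitely many values mu(S) - v(S) form a global minimiser. *)

section \<open>Farkas' lemma\<close>

lemma convex_cone_nonneg_combinations:
  fixes c :: "'i \<Rightarrow> 'a::real_vector" and e :: "'i \<Rightarrow> real"
  shows "convex_cone {(\<Sum>i\<in>I. l i *\<^sub>R c i, (\<Sum>i\<in>I. l i * e i) + s) | l s. (\<forall>i\<in>I. 0 \<le> l i) \<and> 0 \<le> s}"
    (is "convex_cone ?K")
  unfolding convex_cone_iff
proof (intro conjI ballI allI impI)
  show "0 \<in> ?K"
    by (rule CollectI, rule exI[of _ "\<lambda>i. 0"], rule exI[of _ 0]) (simp add: zero_prod_def)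
next
  fix x y assume "x \<in> ?K" "y \<in> ?K"
  then obtain l s l' s' where x: "x = (\<Sum>i\<in>I. l i *\<^sub>R c i, (\<Sum>i\<in>I. l i * e i) + s)" "\<forall>i\<in>I. 0 \<le> l i" "0 \<le> s"
    and y: "y = (\<Sum>i\<in>I. l' i *\<^sub>R c i, (\<Sum>i\<in>I. l' i * e i) + s')" "\<forall>i\<in>I. 0 \<le> l' i" "0 \<le> s'"
    by blast
  show "x + y \<in> ?K"
    by (rule CollectI, rule exI[of _ "\<lambda>i. l i + l' i"], rule exI[of _ "s + s'"])
      (use x y in \<open>auto simp: sum.distrib scaleR_add_left distrib_right\<close>)
next
  fix x and k :: real assume "x \<in> ?K" "0 \<le> k"
  then obtain l s where x: "x = (\<Sum>i\<in>I. l i *\<^sub>R c i, (\<Sum>i\<in>I. l i * e i) + s)" "\<forall>i\<in>I. 0 \<le> l i" "0 \<le> s"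
    by blast
  show "k *\<^sub>R x \<in> ?K"
    by (rule CollectI, rule exI[of _ "\<lambda>i. k * l i"], rule exI[of _ "k * s"])
      (use x \<open>0 \<le> k\<close> in \<open>auto simp: scaleR_sum_right sum_distrib_left distrib_left mult.assoc\<close>)
qed

lemma finite_convex_cone_hull_separation:
  fixes x :: "'a::euclidean_space"
  assumes "finite G" and "x \<notin> convex_cone hull G"
  obtains q where "q \<bullet> x < 0" and "\<And>g. g \<in> G \<Longrightarrow> 0 \<le> q \<bullet> g"
proof -
  have cone: "convex_cone (convex_cone hull G)"
    by (rule convex_cone_convex_cone_hull)
  obtain q \<zeta> where qx: "q \<bullet> x < \<zeta>" and hull: "\<And>y. y \<in> convex_cone hull G \<Longrightarrow> \<zeta> < q \<bullet> y"
    using separating_hyperplane_closed_point[OF convex_convex_cone_hull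
        closed_convex_cone_hull[OF \<open>finite G\<close>] assms(2)] by blast
  have "\<zeta> < 0"
    using hull[OF convex_cone_hull_contains_0] by simp
  have "0 \<le> q \<bullet> g" if "g \<in> G" for g
  proof (rule ccontr)
    assume "\<not> 0 \<le> q \<bullet> g"
    then have neg: "q \<bullet> g < 0" by simp
    have "(2 * \<zeta> / (q \<bullet> g)) *\<^sub>R g \<in> convex_cone hull G"
      using cone hull_inc[OF that] neg \<open>\<zeta> < 0\<close>
      by (simp add: convex_cone_iff divide_nonpos_neg less_imp_le)
    then have "\<zeta> < 2 * \<zeta>"
      using hull neg by fastforce
    then show False using \<open>\<zeta> < 0\<close> by simp
  qed
  with qx \<open>\<zeta> < 0\<close> show ?thesis
    by (intro that[of q]) auto
qed

lemma farkas_valid_inequality: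
  fixes c :: "'i \<Rightarrow> 'a::euclidean_space" and e :: "'i \<Rightarrow> real"
  assumes feasible: "\<forall>i\<in>I. c i \<bullet> w1 \<le> e i"
    and implied: "\<And>w. \<forall>i\<in>I. c i \<bullet> w \<le> e i \<Longrightarrow> a \<bullet> w \<le> \<beta>"
    and "0 \<le> \<tau>" and vc: "\<And>i. i \<in> I \<Longrightarrow> 0 \<le> v \<bullet> c i + \<tau> * e i"
  shows "0 \<le> v \<bullet> a + \<tau> * \<beta>"
proof (cases "\<tau> = 0")
  case False
  with \<open>0 \<le> \<tau>\<close> have "0 < \<tau>" by simp
  have "c i \<bullet> ((- 1 / \<tau>) *\<^sub>R v) \<le> e i" if "i \<in> I" for i
    using vc[OF that] \<open>0 < \<tau>\<close> by (simp add: inner_commute field_simps)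
  then have "a \<bullet> ((- 1 / \<tau>) *\<^sub>R v) \<le> \<beta>"
    by (intro implied) blast
  then show ?thesis
    using \<open>0 < \<tau>\<close> by (simp add: inner_commute field_simps)
next
  case True
  show ?thesis
  proof (rule ccontr)
    assume "\<not> 0 \<le> v \<bullet> a + \<tau> * \<beta>"
    define k where "k = (\<beta> - a \<bullet> w1 + 1) / - (v \<bullet> a)"
    have "v \<bullet> a < 0" and "a \<bullet> w1 \<le> \<beta>"
      using \<open>\<not> 0 \<le> v \<bullet> a + \<tau> * \<beta>\<close> True implied feasible by auto
    then have "0 \<le> k" and ka: "k * (v \<bullet> a) = - (\<beta> - a \<bullet> w1 + 1)"
      unfolding k_def by (simp_all add: divide_nonneg_neg)
    have "c i \<bullet> (w1 - k *\<^sub>R v) \<le> e i" if "i \<in> I" for i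
      using vc[OF that] True feasible that \<open>0 \<le> k\<close>
      by (simp add: inner_diff_right inner_commute) (smt (verit) mult_nonneg_nonneg)
    then have "a \<bullet> (w1 - k *\<^sub>R v) \<le> \<beta>"
      by (intro implied) blast
    then show False
      using ka by (simp add: inner_diff_right inner_commute)
  qed
qed

lemma farkas_inhomogeneous:
  fixes c :: "'i \<Rightarrow> 'a::euclidean_space" and e :: "'i \<Rightarrow> real"
  assumes "finite I" and feasible: "\<forall>i\<in>I. c i \<bullet> w1 \<le> e i"
    and implied: "\<And>w. \<forall>i\<in>I. c i \<bullet> w \<le> e i \<Longrightarrow> a \<bullet> w \<le> \<beta>"
  obtains l where "\<forall>i\<in>I. 0 \<le> l i" and "a = (\<Sum>i\<in>I. l i *\<^sub>R c i)" and "(\<Sum>i\<in>I. l i * e i) \<le> \<beta>"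
proof -
  define K where
    "K = {(\<Sum>i\<in>I. l i *\<^sub>R c i, (\<Sum>i\<in>I. l i * e i) + s) | l s. (\<forall>i\<in>I. 0 \<le> l i) \<and> 0 \<le> s}"
  define G where "G = insert (0, 1) ((\<lambda>i. (c i, e i)) ` I)"
  have "G \<subseteq> K"
  proof
    fix x assume "x \<in> G"
    then consider "x = (0, 1)" | j where "j \<in> I" "x = (c j, e j)"
      unfolding G_def by auto
    then show "x \<in> K"
    proof cases
      case 1
      then show ?thesis
        unfolding K_def by (intro CollectI exI[of _ "\<lambda>i. 0"] exI[of _ 1]) simp
    next
      case 2
      then have "x = (\<Sum>i\<in>I. (if i = j then 1 else 0) *\<^sub>R c i, (\<Sum>i\<in>I. (if i = j then 1 else 0) * e i) + 0)"
        using \<open>finite I\<close> by (simp add: if_distrib[of "\<lambda>t. t *\<^sub>R _"] if_distrib[of "\<lambda>t. t * _"] sum.delta cong: if_cong)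
      then show ?thesis
        unfolding K_def by (intro CollectI exI[of _ "\<lambda>i. if i = j then 1 else 0"] exI[of _ 0]) simp
    qed
  qed
  then have hull_K: "convex_cone hull G \<subseteq> K"
    using convex_cone_nonneg_combinations unfolding K_def by (rule hull_minimal)
  have "(a, \<beta>) \<in> convex_cone hull G"
  proof (rule ccontr)
    assume "(a, \<beta>) \<notin> convex_cone hull G"
    then obtain q where qa: "q \<bullet> (a, \<beta>) < 0" and qG: "\<And>g. g \<in> G \<Longrightarrow> 0 \<le> q \<bullet> g"
      using finite_convex_cone_hull_separation[of G] \<open>finite I\<close> unfolding G_def by blast
    obtain v \<tau> where q: "q = (v, \<tau>)" by fastforce
    have "0 \<le> v \<bullet> a + \<tau> * \<beta>"
    proof (rule farkas_valid_inequality[OF feasible implied])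
      show "0 \<le> \<tau>"
        using qG[of "(0, 1)"] unfolding q G_def by auto
      show "0 \<le> v \<bullet> c i + \<tau> * e i" if "i \<in> I" for i
        using qG[of "(c i, e i)"] that unfolding q G_def by auto
    qed
    with qa show False
      unfolding q by simp
  qed
  with hull_K that show ?thesis
    unfolding K_def by fastforce
qed

lemma polyhedron_as_inequalities:
  fixes P :: "'a::euclidean_space set"
  assumes "polyhedron P"
  obtains F :: "'a set set" and a b where "finite F" and "P = {x. \<forall>h\<in>F. a h \<bullet> x \<le> b h}"
proof -
  obtain F where F: "finite F" "P = \<Inter> F" "\<forall>h\<in>F. \<exists>a b. a \<noteq> 0 \<and> h = {x. a \<bullet> x \<le> b}"
    using assms unfolding polyhedron_def by blast
  then obtain a b where "\<And>h. h \<in> F \<Longrightarrow> h = {x. a h \<bullet> x \<le> b h}"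
    by metis
  then have "P = {x. \<forall>h\<in>F. a h \<bullet> x \<le> b h}"
    unfolding F(2) by blast
  with F(1) show ?thesis
    by (rule that)
qed

lemma polyhedron_inequalities:
  fixes a :: "'h \<Rightarrow> 'a::euclidean_space"
  assumes "finite F"
  shows "polyhedron {x. \<forall>h\<in>F. a h \<bullet> x \<le> b h}"
proof -
  have "{x. \<forall>h\<in>F. a h \<bullet> x \<le> b h} = \<Inter> ((\<lambda>h. {x. a h \<bullet> x \<le> b h}) ` F)"
    by blast
  then show ?thesis
    using assms by (auto intro!: polyhedron_Inter polyhedron_halfspace_le)
qed

lemma polyhedron_Times:
  fixes S :: "'a::euclidean_space set" and T :: "'b::euclidean_space set"
  assumes "polyhedron S" and "polyhedron T"
  shows "polyhedron (S \<times> T)"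
proof -
  obtain F :: "'a set set" and a b where "finite F" and S: "S = {x. \<forall>h\<in>F. a h \<bullet> x \<le> b h}"
    using polyhedron_as_inequalities[OF \<open>polyhedron S\<close>] by blast
  obtain G :: "'b set set" and a' b' where "finite G" and T: "T = {y. \<forall>h\<in>G. a' h \<bullet> y \<le> b' h}"
    using polyhedron_as_inequalities[OF \<open>polyhedron T\<close>] by blast
  have "S \<times> T = {z. \<forall>h\<in>F. (a h, 0) \<bullet> z \<le> b h} \<inter> {z. \<forall>h\<in>G. (0, a' h) \<bullet> z \<le> b' h}"
    unfolding S T by auto
  then show ?thesis
    using \<open>finite F\<close> \<open>finite G\<close> by (simp add: polyhedron_inequalities)
qed

lemma farkas_polyhedron:
  fixes c :: "'i \<Rightarrow> 'a::euclidean_space" and e :: "'i \<Rightarrow> real"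
  assumes "polyhedron P" and "finite I" and w1: "w1 \<in> P" "\<forall>i\<in>I. c i \<bullet> w1 \<le> e i"
    and implied: "\<And>w. w \<in> P \<Longrightarrow> \<forall>i\<in>I. c i \<bullet> w \<le> e i \<Longrightarrow> a \<bullet> w \<le> \<beta>"
  obtains l where "\<forall>i\<in>I. 0 \<le> l i"
    and "\<And>w. w \<in> P \<Longrightarrow> a \<bullet> w - \<beta> \<le> (\<Sum>i\<in>I. l i * (c i \<bullet> w - e i))"
proof -
  obtain F :: "'a set set" and ha hb where "finite F" and P: "P = {x. \<forall>h\<in>F. ha h \<bullet> x \<le> hb h}"
    using polyhedron_as_inequalities[OF \<open>polyhedron P\<close>] by blast
  define c' where "c' = case_sum c ha"
  define e' where "e' = case_sum e hb"
  have system_iff: "(\<forall>j\<in>I <+> F. c' j \<bullet> w \<le> e' j) \<longleftrightarrow> (\<forall>i\<in>I. c i \<bullet> w \<le> e i) \<and> w \<in> P" for w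
    unfolding P c'_def e'_def Plus_def by (simp add: ball_Un)
  have "finite (I <+> F)"
    using \<open>finite I\<close> \<open>finite F\<close> by simp
  moreover have "\<forall>j\<in>I <+> F. c' j \<bullet> w1 \<le> e' j"
    using w1 system_iff[of w1] by blast
  moreover have "a \<bullet> w \<le> \<beta>" if "\<forall>j\<in>I <+> F. c' j \<bullet> w \<le> e' j" for w
    using implied[of w] that system_iff[of w] by blast
  ultimately obtain l where l: "\<forall>j\<in>I <+> F. 0 \<le> l j" "a = (\<Sum>j\<in>I <+> F. l j *\<^sub>R c' j)"
    "(\<Sum>j\<in>I <+> F. l j * e' j) \<le> \<beta>"
    by (rule farkas_inhomogeneous)
  show ?thesis
  proof (rule that[of "\<lambda>i. l (Inl i)"])
    show "\<forall>i\<in>I. 0 \<le> l (Inl i)"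
      using l(1) by auto
  next
    fix w assume "w \<in> P"
    have "a \<bullet> w - \<beta> \<le> (\<Sum>j\<in>I <+> F. l j * (c' j \<bullet> w - e' j))"
      using l(3) unfolding l(2) by (simp add: inner_sum_left sum_subtractf right_diff_distrib)
    also have "\<dots> = (\<Sum>i\<in>I. l (Inl i) * (c i \<bullet> w - e i)) + (\<Sum>h\<in>F. l (Inr h) * (ha h \<bullet> w - hb h))"
      unfolding sum.Plus[OF \<open>finite I\<close> \<open>finite F\<close>] c'_def e'_def by simp
    also have "\<dots> \<le> (\<Sum>i\<in>I. l (Inl i) * (c i \<bullet> w - e i))"
      using l(1) \<open>w \<in> P\<close> unfolding P by (auto intro!: sum_nonpos mult_nonneg_nonpos)
    finally show "a \<bullet> w - \<beta> \<le> (\<Sum>i\<in>I. l (Inl i) * (c i \<bullet> w - e i))" .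
  qed
qed

section \<open>Lagrange multipliers for convex functions\<close>

lemma edom_eq_fst_epigraph: "edom \<phi> = fst ` epigraph_e \<phi>"
proof -
  have "\<phi> x < \<infinity> \<longleftrightarrow> (\<exists>t. \<phi> x \<le> ereal t)" for x
    by (cases "\<phi> x") auto
  then show ?thesis
    unfolding edom_def epigraph_e_def by force
qed

lemma convex_edom: "convex_fun \<phi> \<Longrightarrow> convex (edom \<phi>)"
  unfolding convex_fun_def edom_eq_fst_epigraph by (rule convex_linear_image[OF linear_fst])

lemma rel_interior_bounded_functional_eq_0:
  fixes a :: "'a::euclidean_space"
  assumes w0: "w0 \<in> rel_interior D"
    and bounded: "\<And>w n. w \<in> D \<Longrightarrow> \<forall>d\<in>D. (d - w0) \<bullet> n = 0 \<Longrightarrow> a \<bullet> (w + n) \<le> a \<bullet> w0"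
  shows "a = 0"
proof -
  have "w0 \<in> D"
    using w0 rel_interior_subset by blast
  let ?L = "span ((\<lambda>x. - w0 + x) ` D)"
  obtain y z where "y \<in> ?L" and z_orth: "\<And>v. v \<in> ?L \<Longrightarrow> orthogonal z v" and a: "a = y + z"
    using orthogonal_subspace_decomp_exists by blast
  have "(d - w0) \<bullet> z = 0" if "d \<in> D" for d
    using z_orth[of "- w0 + d"] that by (simp add: span_base orthogonal_def inner_commute)
  then have "a \<bullet> z \<le> 0" and "a \<bullet> - z \<le> 0"
    using bounded[OF \<open>w0 \<in> D\<close>, of z] bounded[OF \<open>w0 \<in> D\<close>, of "- z"]
    by (simp_all add: inner_add_right inner_diff_right)
  moreover have "y \<bullet> z = 0"
    using z_orth[OF \<open>y \<in> ?L\<close>] by (simp add: orthogonal_def inner_commute)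
  ultimately have "z \<bullet> z \<le> 0"
    unfolding a by (simp add: inner_add_left)
  then have "z = 0"
    using inner_gt_zero_iff[of z] by linarith
  with a \<open>y \<in> ?L\<close> have "a \<in> ?L"
    by simp
  show "a = 0"
  proof (rule ccontr)
    assume "a \<noteq> 0"
    obtain \<epsilon> where "\<epsilon> > 0" and ball: "ball w0 \<epsilon> \<inter> affine hull D \<subseteq> D"
      using w0 mem_rel_interior_ball by blast
    define \<delta> where "\<delta> = \<epsilon> / (2 * norm a)"
    have "0 < \<delta>"
      unfolding \<delta>_def using \<open>\<epsilon> > 0\<close> \<open>a \<noteq> 0\<close> by simp
    have "w0 + \<delta> *\<^sub>R a \<in> affine hull D"
      unfolding affine_hull_span_gen[OF hull_inc[OF \<open>w0 \<in> D\<close>]]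
      using \<open>a \<in> ?L\<close> by (intro imageI span_mul)
    moreover have "w0 + \<delta> *\<^sub>R a \<in> ball w0 \<epsilon>"
      using \<open>0 < \<delta>\<close> \<open>\<epsilon> > 0\<close> \<open>a \<noteq> 0\<close> by (simp add: dist_norm \<delta>_def)
    ultimately have "a \<bullet> (w0 + \<delta> *\<^sub>R a + 0) \<le> a \<bullet> w0"
      using ball by (intro bounded) auto
    then have "\<delta> * (a \<bullet> a) \<le> 0"
      by (simp add: inner_add_right)
    with \<open>0 < \<delta>\<close> \<open>a \<noteq> 0\<close> show False
      by (metis inner_gt_zero_iff mult_pos_pos not_le)
  qed
qed

lemma orthogonal_to_affine_hull_eq_0:
  assumes "w0 \<in> D" and "w \<in> D" and "w + n \<in> affine hull D" and orth: "\<forall>d\<in>D. (d - w0) \<bullet> n = 0"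
  shows "n = 0"
proof -
  let ?L = "span ((\<lambda>x. - w0 + x) ` D)"
  obtain l where "l \<in> ?L" and l: "w + n = w0 + l"
    using assms(3) unfolding affine_hull_span_gen[OF hull_inc[OF \<open>w0 \<in> D\<close>]] by blast
  have "- w0 + w \<in> ?L"
    using \<open>w \<in> D\<close> by (intro span_base imageI)
  moreover have "n = l - (- w0 + w)"
    using l by (simp add: algebra_simps)
  ultimately have "n \<in> ?L"
    using \<open>l \<in> ?L\<close> span_diff by metis
  moreover have "orthogonal n v" if "v \<in> (\<lambda>x. - w0 + x) ` D" for v
    using orth that by (auto simp: orthogonal_def inner_commute)
  ultimately have "orthogonal n n"
    by (rule orthogonal_to_span)
  then show ?thesis
    by (simp add: orthogonal_self)
qed

text \<open>Adding to the epigraph the directions orthogonal to the affine hull of \<open>edom \<phi>\<close> is what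
  makes the separating hyperplane non-vertical (\<open>\<alpha> \<noteq> 0\<close> in the next lemma), although
  \<open>edom \<phi>\<close> may have empty interior.\<close>

lemma convex_fun_epigraph_separation:
  fixes \<phi> :: "'a::euclidean_space \<Rightarrow> ereal"
  assumes conv: "convex_fun \<phi>" and w0: "w0 \<in> rel_interior (edom \<phi>)"
    and "convex Q" and "w0 \<in> Q" and bound: "\<And>w. w \<in> Q \<Longrightarrow> ereal p \<le> \<phi> w"
  obtains a \<alpha> b where "(a, \<alpha>) \<noteq> 0"
    and "\<And>w n t. \<phi> w \<le> ereal t \<Longrightarrow> \<forall>d\<in>edom \<phi>. (d - w0) \<bullet> n = 0 \<Longrightarrow> a \<bullet> (w + n) + \<alpha> * t \<le> b"
    and "\<And>w t. w \<in> Q \<Longrightarrow> w \<in> affine hull (edom \<phi>) \<Longrightarrow> t < p \<Longrightarrow> b \<le> a \<bullet> w + \<alpha> * t"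
proof -
  define N where "N = {n. \<forall>d\<in>edom \<phi>. (d - w0) \<bullet> n = 0}"
  define C1 where "C1 = (\<Union>x\<in>epigraph_e \<phi>. \<Union>y\<in>N \<times> {0}. {x + y})"
  define C2 where "C2 = (Q \<inter> affine hull (edom \<phi>)) \<times> {..<p}"
  have "w0 \<in> edom \<phi>"
    using w0 rel_interior_subset by blast
  then obtain t0 where "\<phi> w0 \<le> ereal t0"
    unfolding edom_def by (cases "\<phi> w0") auto
  have "convex N"
    unfolding N_def convex_def by (auto simp: inner_add_right)
  then have "convex C1"
    unfolding C1_def using conv unfolding convex_fun_def by (intro convex_sums convex_Times) auto
  moreover have "convex C2"
    unfolding C2_def using \<open>convex Q\<close> by (intro convex_Times convex_Int) auto
  moreover have "(w0, t0) \<in> C1"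
    unfolding C1_def N_def epigraph_e_def using \<open>\<phi> w0 \<le> ereal t0\<close> by force
  moreover have "(w0, p - 1) \<in> C2"
    unfolding C2_def using \<open>w0 \<in> Q\<close> \<open>w0 \<in> edom \<phi>\<close> by (simp add: hull_inc)
  moreover have "C1 \<inter> C2 = {}"
  proof -
    have False if "\<phi> w \<le> ereal t" "n \<in> N" "w + n \<in> Q" "w + n \<in> affine hull (edom \<phi>)" "t < p" for w n t
    proof -
      have "w \<in> edom \<phi>"
        using \<open>\<phi> w \<le> ereal t\<close> unfolding edom_def by (auto simp: le_less_trans)
      then have "n = 0"
        using orthogonal_to_affine_hull_eq_0 \<open>w0 \<in> edom \<phi>\<close> that(2,4) unfolding N_def by blast
      then have "ereal p \<le> ereal t"
        using bound[of w] that(1,3) by (metis add_0_right order_trans)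
      with \<open>t < p\<close> show False
        by simp
    qed
    then show ?thesis
      unfolding C1_def C2_def epigraph_e_def by fastforce
  qed
  ultimately obtain a' b where "a' \<noteq> 0" and C1: "\<And>x. x \<in> C1 \<Longrightarrow> a' \<bullet> x \<le> b"
    and C2: "\<And>x. x \<in> C2 \<Longrightarrow> b \<le> a' \<bullet> x"
    using separating_hyperplane_sets[of C1 C2] by blast
  obtain a \<alpha> where a': "a' = (a, \<alpha>)"
    by fastforce
  show ?thesis
  proof (rule that[of a \<alpha> b])
    show "(a, \<alpha>) \<noteq> 0"
      using \<open>a' \<noteq> 0\<close> a' by simp
  next
    fix w n t assume "\<phi> w \<le> ereal t" "\<forall>d\<in>edom \<phi>. (d - w0) \<bullet> n = 0"
    then have "(w + n, t) \<in> C1"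
      unfolding C1_def N_def epigraph_e_def by force
    then show "a \<bullet> (w + n) + \<alpha> * t \<le> b"
      using C1 a' by fastforce
  next
    fix w t assume "w \<in> Q" "w \<in> affine hull (edom \<phi>)" "t < p"
    then show "b \<le> a \<bullet> w + \<alpha> * t"
      using C2[of "(w, t)"] a' unfolding C2_def by simp
  qed
qed

lemma convex_fun_nonvertical_separation:
  fixes \<phi> :: "'a::euclidean_space \<Rightarrow> ereal"
  assumes "convex_fun \<phi>" and w0: "w0 \<in> rel_interior (edom \<phi>)"
    and "convex Q" and "w0 \<in> Q" and "\<And>w. w \<in> Q \<Longrightarrow> ereal p \<le> \<phi> w"
  obtains \<alpha> a b where "\<alpha> < 0" and "\<And>w t. \<phi> w \<le> ereal t \<Longrightarrow> a \<bullet> w + \<alpha> * t \<le> b"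
    and "\<And>w t. w \<in> Q \<Longrightarrow> w \<in> affine hull (edom \<phi>) \<Longrightarrow> t < p \<Longrightarrow> b \<le> a \<bullet> w + \<alpha> * t"
proof -
  obtain a \<alpha> b where "(a, \<alpha>) \<noteq> 0"
    and epi: "\<And>w n t. \<phi> w \<le> ereal t \<Longrightarrow> \<forall>d\<in>edom \<phi>. (d - w0) \<bullet> n = 0 \<Longrightarrow> a \<bullet> (w + n) + \<alpha> * t \<le> b"
    and below: "\<And>w t. w \<in> Q \<Longrightarrow> w \<in> affine hull (edom \<phi>) \<Longrightarrow> t < p \<Longrightarrow> b \<le> a \<bullet> w + \<alpha> * t"
    using convex_fun_epigraph_separation[OF assms] by blast
  have epi0: "a \<bullet> w + \<alpha> * t \<le> b" if "\<phi> w \<le> ereal t" for w t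
    using epi[OF that, of 0] by simp
  have "w0 \<in> edom \<phi>"
    using w0 rel_interior_subset by blast
  then obtain t0 where "\<phi> w0 \<le> ereal t0"
    unfolding edom_def by (cases "\<phi> w0") auto
  have "\<alpha> \<le> 0"
  proof (rule ccontr)
    assume "\<not> \<alpha> \<le> 0"
    define t where "t = max t0 ((b - a \<bullet> w0) / \<alpha> + 1)"
    have "\<phi> w0 \<le> ereal t"
      using \<open>\<phi> w0 \<le> ereal t0\<close> unfolding t_def by (simp add: order_trans)
    then have "a \<bullet> w0 + \<alpha> * t \<le> b"
      by (rule epi0)
    moreover have "\<alpha> * ((b - a \<bullet> w0) / \<alpha> + 1) \<le> \<alpha> * t"
      using \<open>\<not> \<alpha> \<le> 0\<close> unfolding t_def by (intro mult_left_mono) auto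
    moreover have "\<alpha> * ((b - a \<bullet> w0) / \<alpha> + 1) = b - a \<bullet> w0 + \<alpha>"
      using \<open>\<not> \<alpha> \<le> 0\<close> by (simp add: field_simps)
    ultimately show False
      using \<open>\<not> \<alpha> \<le> 0\<close> by linarith
  qed
  moreover have "\<alpha> \<noteq> 0"
  proof
    assume "\<alpha> = 0"
    have "b \<le> a \<bullet> w0"
      using below[OF \<open>w0 \<in> Q\<close> hull_inc[OF \<open>w0 \<in> edom \<phi>\<close>], of "p - 1"] \<open>\<alpha> = 0\<close> by simp
    moreover have "a \<bullet> (w + n) \<le> b" if "w \<in> edom \<phi>" "\<forall>d\<in>edom \<phi>. (d - w0) \<bullet> n = 0" for w n
      using that epi[of w _ n] \<open>\<alpha> = 0\<close> unfolding edom_def by (cases "\<phi> w") auto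
    ultimately have "a = 0"
      by (intro rel_interior_bounded_functional_eq_0[OF w0]) (blast intro: order_trans)
    with \<open>\<alpha> = 0\<close> \<open>(a, \<alpha>) \<noteq> 0\<close> show False
      by (simp add: zero_prod_def)
  qed
  ultimately have "\<alpha> < 0"
    by simp
  show ?thesis
    using \<open>\<alpha> < 0\<close> epi0 below by (rule that)
qed

lemma convex_fun_affine_minorant:
  fixes \<phi> :: "'a::euclidean_space \<Rightarrow> ereal"
  assumes "convex_fun \<phi>" and "w0 \<in> rel_interior (edom \<phi>)"
    and "convex Q" and "w0 \<in> Q" and "\<And>w. w \<in> Q \<Longrightarrow> ereal p \<le> \<phi> w"
  obtains a \<beta> where "\<And>w. w \<in> Q \<Longrightarrow> w \<in> affine hull (edom \<phi>) \<Longrightarrow> a \<bullet> w \<le> \<beta>"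
    and "\<And>w. ereal p \<le> \<phi> w + ereal (a \<bullet> w - \<beta>)"
proof -
  obtain \<alpha> a b where "\<alpha> < 0" and epi0: "\<And>w t. \<phi> w \<le> ereal t \<Longrightarrow> a \<bullet> w + \<alpha> * t \<le> b"
    and below: "\<And>w t. w \<in> Q \<Longrightarrow> w \<in> affine hull (edom \<phi>) \<Longrightarrow> t < p \<Longrightarrow> b \<le> a \<bullet> w + \<alpha> * t"
    using convex_fun_nonvertical_separation[OF assms] by metis
  define r where "r w = (b - a \<bullet> w) / \<alpha>" for w
  have r_le: "r w \<le> t" if "\<phi> w \<le> ereal t" for w t
    using epi0[OF that] \<open>\<alpha> < 0\<close> unfolding r_def by (simp add: divide_le_eq algebra_simps)
  show ?thesis
  proof (rule that[of "(1 / \<alpha>) *\<^sub>R a" "b / \<alpha> - p"])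
    fix w assume "w \<in> Q" "w \<in> affine hull (edom \<phi>)"
    have "p \<le> r w"
    proof (rule dense_le)
      fix t assume "t < p"
      then have "b - a \<bullet> w \<le> t * \<alpha>"
        using below[OF \<open>w \<in> Q\<close> \<open>w \<in> affine hull (edom \<phi>)\<close> \<open>t < p\<close>] by (simp add: mult.commute)
      with \<open>\<alpha> < 0\<close> show "t \<le> r w"
        unfolding r_def by (simp add: le_divide_eq)
    qed
    then show "(1 / \<alpha>) *\<^sub>R a \<bullet> w \<le> b / \<alpha> - p"
      unfolding r_def by (simp add: diff_divide_distrib)
  next
    fix w
    have "ereal (r w) \<le> \<phi> w"
    proof (rule ereal_le_real)
      fix z assume "\<phi> w \<le> ereal z"
      then show "ereal (r w) \<le> ereal z"
        using r_le by simp
    qed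
    moreover have "(1 / \<alpha>) *\<^sub>R a \<bullet> w - (b / \<alpha> - p) = p - r w"
      unfolding r_def by (simp add: diff_divide_distrib)
    ultimately show "ereal p \<le> \<phi> w + ereal ((1 / \<alpha>) *\<^sub>R a \<bullet> w - (b / \<alpha> - p))"
      by (cases "\<phi> w") simp_all
  qed
qed

lemma convex_fun_lagrange_multipliers:
  fixes \<phi> :: "'a::euclidean_space \<Rightarrow> ereal" and c :: "'i \<Rightarrow> 'a" and e :: "'i \<Rightarrow> real"
  assumes conv: "convex_fun \<phi>" and w0: "w0 \<in> rel_interior (edom \<phi>)"
    and "polyhedron P" and "w0 \<in> P" and "finite I" and w0I: "\<forall>i\<in>I. c i \<bullet> w0 \<le> e i"
    and bound: "\<And>w. w \<in> P \<Longrightarrow> \<forall>i\<in>I. c i \<bullet> w \<le> e i \<Longrightarrow> ereal p \<le> \<phi> w"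
  obtains l where "\<forall>i\<in>I. 0 \<le> l i"
    and "\<And>w. w \<in> P \<Longrightarrow> ereal p \<le> \<phi> w + ereal (\<Sum>i\<in>I. l i * (c i \<bullet> w - e i))"
proof -
  define Q where "Q = P \<inter> (\<Inter>i\<in>I. {w. c i \<bullet> w \<le> e i})"
  have "convex Q"
    unfolding Q_def using \<open>polyhedron P\<close>
    by (intro convex_Int convex_INT polyhedron_imp_convex convex_halfspace_le)
  moreover have "w0 \<in> Q"
    unfolding Q_def using \<open>w0 \<in> P\<close> w0I by blast
  moreover have "ereal p \<le> \<phi> w" if "w \<in> Q" for w
    using bound[of w] that unfolding Q_def by simp
  ultimately obtain a \<beta> where sep: "\<And>w. w \<in> Q \<Longrightarrow> w \<in> affine hull (edom \<phi>) \<Longrightarrow> a \<bullet> w \<le> \<beta>"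
    and minorant: "\<And>w. ereal p \<le> \<phi> w + ereal (a \<bullet> w - \<beta>)"
    using convex_fun_affine_minorant[OF conv w0] by blast
  have poly: "polyhedron (P \<inter> affine hull (edom \<phi>))"
    by (simp add: \<open>polyhedron P\<close> polyhedron_affine_hull)
  have w0': "w0 \<in> P \<inter> affine hull (edom \<phi>)"
    using \<open>w0 \<in> P\<close> hull_inc[OF set_mp[OF rel_interior_subset w0]] by simp
  have implied: "a \<bullet> w \<le> \<beta>" if "w \<in> P \<inter> affine hull (edom \<phi>)" "\<forall>i\<in>I. c i \<bullet> w \<le> e i" for w
    using sep[of w] that unfolding Q_def by simp
  obtain l where "\<forall>i\<in>I. 0 \<le> l i"
    and farkas: "\<And>w. w \<in> P \<inter> affine hull (edom \<phi>) \<Longrightarrow> a \<bullet> w - \<beta> \<le> (\<Sum>i\<in>I. l i * (c i \<bullet> w - e i))"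
    using farkas_polyhedron[OF poly \<open>finite I\<close> w0' w0I implied] by blast
  show ?thesis
  proof (rule that[OF \<open>\<forall>i\<in>I. 0 \<le> l i\<close>])
    fix w assume "w \<in> P"
    show "ereal p \<le> \<phi> w + ereal (\<Sum>i\<in>I. l i * (c i \<bullet> w - e i))"
    proof (cases "w \<in> edom \<phi>")
      case True
      then have "a \<bullet> w - \<beta> \<le> (\<Sum>i\<in>I. l i * (c i \<bullet> w - e i))"
        using farkas[of w] \<open>w \<in> P\<close> hull_inc[OF True] by simp
      then have "\<phi> w + ereal (a \<bullet> w - \<beta>) \<le> \<phi> w + ereal (\<Sum>i\<in>I. l i * (c i \<bullet> w - e i))"
        by (intro add_left_mono) simp
      with minorant show ?thesis
        by (rule order_trans)
    next
      case False
      then show ?thesis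
        unfolding edom_def by simp
    qed
  qed
qed

lemma convex_fun_lagrange_multipliers_eq:
  fixes \<phi> :: "'a::euclidean_space \<Rightarrow> ereal" and c :: "'i \<Rightarrow> 'a" and d :: "'j \<Rightarrow> 'a"
  assumes conv: "convex_fun \<phi>" and w0: "w0 \<in> rel_interior (edom \<phi>)"
    and P: "polyhedron P" "w0 \<in> P" and "finite I" and "finite J"
    and w0I: "\<forall>i\<in>I. c i \<bullet> w0 \<le> e i" and w0J: "\<forall>j\<in>J. d j \<bullet> w0 = h j"
    and bound: "\<And>w. w \<in> P \<Longrightarrow> \<forall>i\<in>I. c i \<bullet> w \<le> e i \<Longrightarrow> \<forall>j\<in>J. d j \<bullet> w = h j \<Longrightarrow> ereal p \<le> \<phi> w"
  obtains l k where "\<forall>i\<in>I. 0 \<le> l i"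
    and "\<And>w. w \<in> P \<Longrightarrow>
      ereal p \<le> \<phi> w + ereal ((\<Sum>i\<in>I. l i * (c i \<bullet> w - e i)) + (\<Sum>j\<in>J. k j * (d j \<bullet> w - h j)))"
proof -
  define c' where "c' = case_sum c (case_sum d (\<lambda>j. - d j))"
  define e' where "e' = case_sum e (case_sum h (\<lambda>j. - h j))"
  have system_iff: "(\<forall>x\<in>I <+> (J <+> J). c' x \<bullet> w \<le> e' x) \<longleftrightarrow>
      (\<forall>i\<in>I. c i \<bullet> w \<le> e i) \<and> (\<forall>j\<in>J. d j \<bullet> w = h j)" for w
    unfolding c'_def e'_def Plus_def by (auto simp: ball_Un intro: order_antisym)
  have "finite (I <+> (J <+> J))"
    using \<open>finite I\<close> \<open>finite J\<close> by simp
  then obtain l' where l': "\<forall>x\<in>I <+> (J <+> J). 0 \<le> l' x"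
    and lagrange: "\<And>w. w \<in> P \<Longrightarrow> ereal p \<le> \<phi> w + ereal (\<Sum>x\<in>I <+> (J <+> J). l' x * (c' x \<bullet> w - e' x))"
    using convex_fun_lagrange_multipliers[OF conv w0 P, of "I <+> (J <+> J)" c' e' p]
      w0I w0J bound system_iff by blast
  have sum_eq: "(\<Sum>x\<in>I <+> (J <+> J). l' x * (c' x \<bullet> w - e' x)) =
      (\<Sum>i\<in>I. l' (Inl i) * (c i \<bullet> w - e i))
      + (\<Sum>j\<in>J. (l' (Inr (Inl j)) - l' (Inr (Inr j))) * (d j \<bullet> w - h j))" for w
    unfolding sum.Plus[OF \<open>finite I\<close> finite_Plus[OF \<open>finite J\<close> \<open>finite J\<close>]]
      sum.Plus[OF \<open>finite J\<close> \<open>finite J\<close>] c'_def e'_def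
    by (simp add: sum.distrib[symmetric] algebra_simps)
  show ?thesis
    using that[of "\<lambda>i. l' (Inl i)" "\<lambda>j. l' (Inr (Inl j)) - l' (Inr (Inr j))"] l' lagrange
    unfolding sum_eq by auto
qed

lemma convex_fun_separable_sum:
  fixes F :: "'a::real_vector \<Rightarrow> ereal" and G :: "'b::real_vector \<Rightarrow> ereal"
  assumes "convex_fun F" and "convex_fun G" and F: "\<And>v. F v \<noteq> -\<infinity>" and G: "\<And>w. G w \<noteq> -\<infinity>"
  shows "convex_fun (\<lambda>z. F (fst z) + G (snd z))"
proof -
  define L :: "('a \<times> real) \<times> ('b \<times> real) \<Rightarrow> ('a \<times> 'b) \<times> real"
    where "L = (\<lambda>((v, s), (w, t)). ((v, w), s + t))"
  have "linear L"
    unfolding L_def by (simp add: linear_iff case_prod_beta algebra_simps)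
  have "epigraph_e (\<lambda>z. F (fst z) + G (snd z)) = L ` (epigraph_e F \<times> epigraph_e G)"
  proof (intro equalityI subsetI)
    fix x assume "x \<in> epigraph_e (\<lambda>z. F (fst z) + G (snd z))"
    then obtain v w r where x: "x = ((v, w), r)" and le: "F v + G w \<le> ereal r"
      unfolding epigraph_e_def by auto
    then obtain s where s: "F v = ereal s"
      using F[of v] G[of w] by (cases "F v"; cases "G w") auto
    with le have "G w \<le> ereal (r - s)"
      using G[of w] by (cases "G w") auto
    with s have "((v, s), (w, r - s)) \<in> epigraph_e F \<times> epigraph_e G"
      unfolding epigraph_e_def by simp
    moreover have "x = L ((v, s), (w, r - s))"
      unfolding x L_def by simp
    ultimately show "x \<in> L ` (epigraph_e F \<times> epigraph_e G)"
      by blast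
  next
    fix x assume "x \<in> L ` (epigraph_e F \<times> epigraph_e G)"
    then obtain v s w t where x: "x = ((v, w), s + t)" and "F v \<le> ereal s" "G w \<le> ereal t"
      unfolding L_def epigraph_e_def by auto
    from \<open>F v \<le> ereal s\<close> \<open>G w \<le> ereal t\<close> have "F v + G w \<le> ereal s + ereal t"
      by (rule add_mono)
    then show "x \<in> epigraph_e (\<lambda>z. F (fst z) + G (snd z))"
      unfolding x epigraph_e_def by simp
  qed
  then show ?thesis
    using assms(1,2) unfolding convex_fun_def
    by (simp add: convex_linear_image[OF \<open>linear L\<close>] convex_Times)
qed

lemma edom_separable_sum:
  assumes "\<And>v. F v \<noteq> -\<infinity>" and "\<And>w. G w \<noteq> -\<infinity>"
  shows "edom (\<lambda>z. F (fst z) + G (snd z)) = edom F \<times> edom G"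
proof -
  have "F v + G w < \<infinity> \<longleftrightarrow> F v < \<infinity> \<and> G w < \<infinity>" for v w
    using assms(1)[of v] assms(2)[of w] by (cases "F v"; cases "G w") auto
  then show ?thesis
    unfolding edom_def by auto
qed

text \<open>A polyhedral function enters the Lagrangian argument through its epigraph, as the
  objective \<open>(x, t) \<mapsto> t\<close> under the polyhedral constraint \<open>(x, t) \<in> epigraph_e h\<close>; polyhedral
  constraints need no relative interior point, which is why \<open>x\<^sub>0 \<in> edom h\<close> suffices then.\<close>

definition lift_fun :: "('a::euclidean_space \<Rightarrow> ereal) \<Rightarrow> 'a \<times> real \<Rightarrow> ereal" where
  "lift_fun h v = (if polyhedral_fun h then ereal (snd v) else h (fst v))"

definition lift_set :: "('a::euclidean_space \<Rightarrow> ereal) \<Rightarrow> ('a \<times> real) set" where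
  "lift_set h = (if polyhedral_fun h then epigraph_e h else UNIV)"

lemma polyhedron_lift_set: "polyhedron (lift_set h)"
  unfolding lift_set_def polyhedral_fun_def by simp

lemma convex_fun_lift_fun:
  assumes "convex_fun h"
  shows "convex_fun (lift_fun h)"
proof (cases "polyhedral_fun h")
  case True
  have "epigraph_e (lift_fun h) = {z. ((0, 1), - 1) \<bullet> z \<le> 0}"
    unfolding epigraph_e_def lift_fun_def using True by auto
  then show ?thesis
    unfolding convex_fun_def by (simp add: convex_halfspace_le)
next
  case False
  have "epigraph_e (lift_fun h) = (\<lambda>z. (fst (fst z), snd z)) -` epigraph_e h"
    unfolding epigraph_e_def lift_fun_def using False by auto
  moreover have "linear (\<lambda>z::('a \<times> real) \<times> real. (fst (fst z), snd z))"
    by (simp add: linear_iff)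
  ultimately show ?thesis
    using assms unfolding convex_fun_def by (simp add: convex_linear_vimage)
qed

lemma lift_fun_not_minf: "proper_fun h \<Longrightarrow> lift_fun h v \<noteq> -\<infinity>"
  unfolding lift_fun_def proper_fun_def by simp

lemma lift_fun_lower: "v \<in> lift_set h \<Longrightarrow> h (fst v) \<le> lift_fun h v"
  unfolding lift_set_def lift_fun_def epigraph_e_def by (auto split: if_splits)

lemma lift_fun_graph: "h x = ereal r \<Longrightarrow> lift_fun h (x, r) = ereal r"
  unfolding lift_fun_def by simp

lemma graph_in_lift_set: "h x = ereal r \<Longrightarrow> (x, r) \<in> lift_set h"
  unfolding lift_set_def epigraph_e_def by simp

lemma mem_edom_if_rel_interior:
  "x \<in> (if polyhedral_fun h then edom h else rel_interior (edom h)) \<Longrightarrow> h x < \<infinity>"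
  using rel_interior_subset unfolding edom_def by (auto split: if_splits)

lemma rel_interior_edom_lift_fun:
  assumes "convex_fun h" and "x0 \<in> (if polyhedral_fun h then edom h else rel_interior (edom h))"
  shows "(x0, t) \<in> rel_interior (edom (lift_fun h))"
proof (cases "polyhedral_fun h")
  case True
  then have "edom (lift_fun h) = UNIV"
    unfolding edom_def lift_fun_def by simp
  then show ?thesis
    by simp
next
  case False
  then have "edom (lift_fun h) = edom h \<times> UNIV"
    unfolding edom_def lift_fun_def by auto
  then show ?thesis
    using assms False by (simp add: rel_interior_Times convex_edom)
qed

lemma convex_fun_lift_sum:
  assumes "proper_fun f" "convex_fun f" "proper_fun g" "convex_fun g"
  shows "convex_fun (\<lambda>w. lift_fun f (fst w) + lift_fun g (snd w))"
  using assms by (intro convex_fun_separable_sum convex_fun_lift_fun lift_fun_not_minf)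

lemma rel_interior_edom_lift_sum:
  assumes "proper_fun f" "convex_fun f" "proper_fun g" "convex_fun g"
    and "x0 \<in> (if polyhedral_fun f then edom f else rel_interior (edom f))"
    and "u0 \<in> (if polyhedral_fun g then edom g else rel_interior (edom g))"
  shows "((x0, t), (u0, s)) \<in> rel_interior (edom (\<lambda>w. lift_fun f (fst w) + lift_fun g (snd w)))"
  using assms
  by (simp add: edom_separable_sum lift_fun_not_minf rel_interior_Times convex_edom
      convex_fun_lift_fun rel_interior_edom_lift_fun)

section \<open>Lagrangian duality\<close>

lemma SUP_add_SUP_le_ereal:
  fixes a :: "'a \<Rightarrow> ereal" and c :: "'b \<Rightarrow> ereal"
  assumes le: "\<And>x u. a x + c u \<le> ereal K" and "a x1 \<noteq> -\<infinity>" and "c u1 \<noteq> -\<infinity>"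
  shows "(SUP x. a x) + (SUP u. c u) \<le> ereal K"
proof -
  have c_le: "(SUP u. c u) \<le> ereal (K - \<alpha>)" if "a x = ereal \<alpha>" for x \<alpha>
  proof (rule SUP_least)
    fix u show "c u \<le> ereal (K - \<alpha>)"
      using le[of x u] that by (cases "c u") auto
  qed
  obtain \<alpha>1 where "a x1 = ereal \<alpha>1"
    using le[of x1 u1] \<open>a x1 \<noteq> -\<infinity>\<close> \<open>c u1 \<noteq> -\<infinity>\<close> by (cases "a x1"; cases "c u1") auto
  moreover have "c u1 \<le> (SUP u. c u)"
    by (rule SUP_upper) simp
  ultimately obtain \<gamma> where \<gamma>: "(SUP u. c u) = ereal \<gamma>"
    using c_le[of x1 \<alpha>1] \<open>c u1 \<noteq> -\<infinity>\<close> by (cases "SUP u. c u") auto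
  have "a x \<le> ereal (K - \<gamma>)" for x
  proof (cases "a x")
    case (real \<alpha>)
    then show ?thesis
      using c_le[OF real] \<gamma> by simp
  next
    case PInf
    then show ?thesis
      using le[of x u1] \<open>c u1 \<noteq> -\<infinity>\<close> by simp
  qed simp
  then have "(SUP x. a x) \<le> ereal (K - \<gamma>)"
    by (rule SUP_least)
  then show ?thesis
    unfolding \<gamma> by (cases "SUP x. a x") auto
qed

definition lagrangian ::
  "(real^'n \<Rightarrow> ereal) \<Rightarrow> (real^'m \<Rightarrow> ereal) \<Rightarrow> real^'n^'m \<Rightarrow> real^'n^'r \<Rightarrow> real^'r
     \<Rightarrow> real^'m \<Rightarrow> real^'r \<Rightarrow> real^'n \<Rightarrow> real^'m \<Rightarrow> ereal" where
  "lagrangian f g A B b y z x u = f x + g u + ereal (y \<bullet> (A *v x - u) + z \<bullet> (B *v x - b))"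

lemma neg_lagrangian_eq:
  assumes "f x \<noteq> -\<infinity>" and "g u \<noteq> -\<infinity>"
  shows "- lagrangian f g A B b y z x u =
    (ereal ((- (transpose A *v y) - (transpose B *v z)) \<bullet> x) - f x) + (ereal (y \<bullet> u) - g u)
      + ereal (b \<bullet> z)"
proof -
  have "(- (transpose A *v y) - (transpose B *v z)) \<bullet> x = - (y \<bullet> (A *v x)) - z \<bullet> (B *v x)"
    by (simp add: inner_diff_left dot_lmul_matrix)
  then show ?thesis
    unfolding lagrangian_def using assms
    by (cases "f x"; cases "g u") (simp_all add: inner_diff_right inner_commute[of b z] algebra_simps)
qed

lemma neg_lagrangian_le_Xi_fun:
  assumes "proper_fun f" and "proper_fun g"
  shows "- lagrangian f g A B b y z x u \<le> Xi_fun f g A B b y z"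
proof -
  have "f x \<noteq> -\<infinity>" and "g u \<noteq> -\<infinity>"
    using assms unfolding proper_fun_def by auto
  then show ?thesis
    unfolding neg_lagrangian_eq[of f x g u, OF \<open>f x \<noteq> -\<infinity>\<close> \<open>g u \<noteq> -\<infinity>\<close>] Xi_fun_def conj_fun_def
    by (intro add_mono SUP_upper order_refl) simp_all
qed

lemma Xi_fun_not_minf:
  assumes "proper_fun f" and "proper_fun g"
  shows "Xi_fun f g A B b y z \<noteq> -\<infinity>"
proof -
  obtain x u where "f x \<noteq> \<infinity>" and "g u \<noteq> \<infinity>"
    using assms unfolding proper_fun_def by auto
  then have "- lagrangian f g A B b y z x u \<noteq> -\<infinity>"
    using assms unfolding proper_fun_def lagrangian_def
    by (cases "f x"; cases "g u") auto
  then show ?thesis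
    using neg_lagrangian_le_Xi_fun[OF assms, of A B b y z x u] by auto
qed

lemma Xi_fun_le_if_lagrangian_ge:
  assumes "proper_fun f" and "proper_fun g"
    and ge: "\<And>x u. ereal p \<le> lagrangian f g A B b y z x u"
  shows "Xi_fun f g A B b y z \<le> ereal (- p)"
proof -
  define q where "q = - (transpose A *v y) - (transpose B *v z)"
  have not_minf: "f x \<noteq> -\<infinity>" "g u \<noteq> -\<infinity>" for x u
    using assms unfolding proper_fun_def by auto
  have "(ereal (q \<bullet> x) - f x) + (ereal (y \<bullet> u) - g u) \<le> ereal (- p - b \<bullet> z)" for x u
  proof -
    have "(ereal (q \<bullet> x) - f x) + (ereal (y \<bullet> u) - g u) + ereal (b \<bullet> z)
        = - lagrangian f g A B b y z x u"
      unfolding q_def by (rule neg_lagrangian_eq[OF not_minf, symmetric])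
    also have "\<dots> \<le> ereal (- p)"
      using ge[of x u] by (subst ereal_uminus_le_reorder) simp
    finally have "(ereal (q \<bullet> x) - f x) + (ereal (y \<bullet> u) - g u) + ereal (b \<bullet> z) \<le> ereal (- p)" .
    then have "(ereal (q \<bullet> x) - f x) + (ereal (y \<bullet> u) - g u) \<le> ereal (- p) - ereal (b \<bullet> z)"
      by (subst ereal_le_minus) simp_all
    then show ?thesis
      by simp
  qed
  moreover obtain x1 u1 where "f x1 \<noteq> \<infinity>" and "g u1 \<noteq> \<infinity>"
    using assms unfolding proper_fun_def by auto
  ultimately have "conj_fun f q + conj_fun g y \<le> ereal (- p - b \<bullet> z)"
    unfolding conj_fun_def using not_minf(1)[of x1] not_minf(2)[of u1]
    by (intro SUP_add_SUP_le_ereal[of _ _ _ x1 u1]) (cases "f x1"; cases "g u1"; simp_all)+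
  then have "conj_fun f q + conj_fun g y \<le> ereal (- p) - ereal (b \<bullet> z)"
    by simp
  then show ?thesis
    unfolding Xi_fun_def q_def[symmetric] by (subst (asm) ereal_le_minus) simp_all
qed

lemma lagrangian_le_objective:
  assumes "\<forall>i. 0 \<le> z $ i" and "\<forall>i. i \<notin> S \<longrightarrow> z $ i = 0" and "\<forall>i\<in>S. (B *v x) $ i \<le> b $ i"
  shows "lagrangian f g A B b y z x (A *v x) \<le> f x + g (A *v x)"
proof -
  have "z \<bullet> (B *v x - b) \<le> 0"
    unfolding inner_vec_def using assms
    by (intro sum_nonpos) (metis diff_le_0_iff_le inner_real_def mult_nonneg_nonpos
        mult_zero_left vector_minus_component)
  then show ?thesis
    unfolding lagrangian_def by (cases "f x"; cases "g (A *v x)") simp_all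
qed

lemma weak_duality:
  assumes "proper_fun f" and "proper_fun g"
    and "\<forall>i. 0 \<le> z $ i" and "\<forall>i. i \<notin> S \<longrightarrow> z $ i = 0" and "\<forall>i\<in>S. (B *v x) $ i \<le> b $ i"
  shows "- (f x + g (A *v x)) \<le> Xi_fun f g A B b y z"
proof -
  have "- (f x + g (A *v x)) \<le> - lagrangian f g A B b y z x (A *v x)"
    using lagrangian_le_objective[OF assms(3-5)] by simp
  also have "\<dots> \<le> Xi_fun f g A B b y z"
    by (rule neg_lagrangian_le_Xi_fun[OF assms(1,2)])
  finally show ?thesis .
qed

lemma inner_restrict_vector: "(\<chi> i. if i \<in> S then l i else 0) \<bullet> v = (\<Sum>i\<in>S. l i * v $ i)"
  for v :: "real^'r"
  unfolding inner_vec_def by (simp add: if_distrib[of "\<lambda>t. t * _"] sum.If_cases)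

lemma restricted_lagrange_multipliers:
  fixes f :: "real^'n \<Rightarrow> ereal" and g :: "real^'m \<Rightarrow> ereal"
    and A :: "real^'n^'m" and B :: "real^'n^'r" and b :: "real^'r"
  assumes f: "proper_fun f" "convex_fun f" and g: "proper_fun g" "convex_fun g"
    and x0f: "x0 \<in> (if polyhedral_fun f then edom f else rel_interior (edom f))"
    and x0g: "A *v x0 \<in> (if polyhedral_fun g then edom g else rel_interior (edom g))"
    and x0B: "\<forall>i\<in>S. (B *v x0) $ i \<le> b $ i"
    and bound: "\<And>x. \<forall>i\<in>S. (B *v x) $ i \<le> b $ i \<Longrightarrow> ereal p \<le> f x + g (A *v x)"
  obtains l k where "\<forall>i\<in>S. 0 \<le> l i"
    and "\<And>x t u s. (x, t) \<in> lift_set f \<Longrightarrow> (u, s) \<in> lift_set g \<Longrightarrow>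
      ereal p \<le> lift_fun f (x, t) + lift_fun g (u, s)
        + ereal ((\<Sum>i\<in>S. l i * ((B *v x) $ i - b $ i)) + (\<Sum>j\<in>UNIV. k j * ((A *v x) $ j - u $ j)))"
proof -
  define \<phi> where "\<phi> w = lift_fun f (fst w) + lift_fun g (snd w)"
    for w :: "((real^'n) \<times> real) \<times> ((real^'m) \<times> real)"
  define c where "c i = (((B $ i, 0), (0, 0)) :: ((real^'n) \<times> real) \<times> ((real^'m) \<times> real))" for i
  define d where "d j = (((A $ j, 0), (- axis j 1, 0)) :: ((real^'n) \<times> real) \<times> ((real^'m) \<times> real))" for j
  have c: "c i \<bullet> ((x, t), (u, s)) = (B *v x) $ i" for i x t u s
    unfolding c_def by (simp add: matrix_vector_mul_component)
  have d: "d j \<bullet> ((x, t), (u, s)) = (A *v x) $ j - u $ j" for j x t u s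
    unfolding d_def by (simp add: matrix_vector_mul_component inner_axis')
  have bound_\<phi>: "ereal p \<le> \<phi> w"
    if "w \<in> lift_set f \<times> lift_set g" "\<forall>i\<in>S. c i \<bullet> w \<le> b $ i" "\<forall>j\<in>UNIV. d j \<bullet> w = 0" for w
  proof -
    obtain x t u s where w: "w = ((x, t), (u, s))"
      by (metis prod.collapse)
    have "u = A *v x"
      using that(3) unfolding w d by (simp add: vec_eq_iff)
    then have "ereal p \<le> f x + g u"
      using bound that(2) unfolding w c by simp
    also have "\<dots> \<le> \<phi> w"
      unfolding \<phi>_def w using lift_fun_lower[of "(x, t)" f] lift_fun_lower[of "(u, s)" g] that(1)
      by (simp add: w add_mono)
    finally show ?thesis .
  qed
  obtain rf rg where rf: "f x0 = ereal rf" and rg: "g (A *v x0) = ereal rg"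
    using mem_edom_if_rel_interior[OF x0f] mem_edom_if_rel_interior[OF x0g] f(1) g(1)
    unfolding proper_fun_def by (cases "f x0"; cases "g (A *v x0)") auto
  define w0 where "w0 = ((x0, rf), (A *v x0, rg))"
  have conv: "convex_fun \<phi>"
    unfolding \<phi>_def by (rule convex_fun_lift_sum[OF f g])
  have w0: "w0 \<in> rel_interior (edom \<phi>)"
    unfolding \<phi>_def w0_def by (rule rel_interior_edom_lift_sum[OF f g x0f x0g])
  have poly: "polyhedron (lift_set f \<times> lift_set g)"
    by (intro polyhedron_Times polyhedron_lift_set)
  have w0P: "w0 \<in> lift_set f \<times> lift_set g"
    unfolding w0_def using graph_in_lift_set[of f, OF rf] graph_in_lift_set[of g, OF rg] by simp
  have fin: "finite S" "finite (UNIV :: 'm set)"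
    by simp_all
  have w0I: "\<forall>i\<in>S. c i \<bullet> w0 \<le> b $ i" and w0J: "\<forall>j\<in>UNIV. d j \<bullet> w0 = 0"
    unfolding w0_def c d using x0B by simp_all
  obtain l k where "\<forall>i\<in>S. 0 \<le> l i" and lagrange: "\<And>w. w \<in> lift_set f \<times> lift_set g \<Longrightarrow>
      ereal p \<le> \<phi> w + ereal ((\<Sum>i\<in>S. l i * (c i \<bullet> w - b $ i)) + (\<Sum>j\<in>UNIV. k j * (d j \<bullet> w - 0)))"
    using convex_fun_lagrange_multipliers_eq[OF conv w0 poly w0P fin w0I w0J bound_\<phi>] by blast
  show ?thesis
  proof (rule that[of l k, OF \<open>\<forall>i\<in>S. 0 \<le> l i\<close>])
    fix x t u s assume "(x, t) \<in> lift_set f" and "(u, s) \<in> lift_set g"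
    then show "ereal p \<le> lift_fun f (x, t) + lift_fun g (u, s)
        + ereal ((\<Sum>i\<in>S. l i * ((B *v x) $ i - b $ i)) + (\<Sum>j\<in>UNIV. k j * ((A *v x) $ j - u $ j)))"
      using lagrange[of "((x, t), (u, s))"] unfolding \<phi>_def c d by simp
  qed
qed

lemma restricted_strong_duality:
  fixes f :: "real^'n \<Rightarrow> ereal" and g :: "real^'m \<Rightarrow> ereal"
    and A :: "real^'n^'m" and B :: "real^'n^'r" and b :: "real^'r"
  assumes f: "proper_fun f" "convex_fun f" and g: "proper_fun g" "convex_fun g"
    and "x0 \<in> (if polyhedral_fun f then edom f else rel_interior (edom f))"
    and "A *v x0 \<in> (if polyhedral_fun g then edom g else rel_interior (edom g))"
    and "\<forall>i\<in>S. (B *v x0) $ i \<le> b $ i"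
    and "\<And>x. \<forall>i\<in>S. (B *v x) $ i \<le> b $ i \<Longrightarrow> ereal p \<le> f x + g (A *v x)"
  obtains y z where "\<forall>i. 0 \<le> z $ i" and "\<forall>i. i \<notin> S \<longrightarrow> z $ i = 0"
    and "\<And>x u. ereal p \<le> lagrangian f g A B b y z x u"
proof -
  obtain l k where "\<forall>i\<in>S. 0 \<le> l i"
    and lagrange: "\<And>x t u s. (x, t) \<in> lift_set f \<Longrightarrow> (u, s) \<in> lift_set g \<Longrightarrow>
      ereal p \<le> lift_fun f (x, t) + lift_fun g (u, s)
        + ereal ((\<Sum>i\<in>S. l i * ((B *v x) $ i - b $ i)) + (\<Sum>j\<in>UNIV. k j * ((A *v x) $ j - u $ j)))"
    using restricted_lagrange_multipliers[OF assms] by blast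
  show ?thesis
  proof (rule that[of "\<chi> i. if i \<in> S then l i else 0" "\<chi> j. k j"])
    fix x u
    show "ereal p \<le> lagrangian f g A B b (\<chi> j. k j) (\<chi> i. if i \<in> S then l i else 0) x u"
    proof (cases "f x = \<infinity> \<or> g u = \<infinity>")
      case True
      then show ?thesis
        using f(1) g(1) unfolding lagrangian_def proper_fun_def by auto
    next
      case False
      then obtain rx ru where rx: "f x = ereal rx" and ru: "g u = ereal ru"
        using f(1) g(1) unfolding proper_fun_def by (cases "f x"; cases "g u") auto
      have "ereal p \<le> lift_fun f (x, rx) + lift_fun g (u, ru) + ereal ((\<Sum>i\<in>S. l i * ((B *v x) $ i - b $ i))
          + (\<Sum>j\<in>UNIV. k j * ((A *v x) $ j - u $ j)))"
        using lagrange graph_in_lift_set[of f, OF rx] graph_in_lift_set[of g, OF ru] by blast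
      also have "\<dots> = lagrangian f g A B b (\<chi> j. k j) (\<chi> i. if i \<in> S then l i else 0) x u"
        unfolding lagrangian_def inner_restrict_vector
        by (simp add: lift_fun_graph[of f, OF rx] lift_fun_graph[of g, OF ru] rx ru inner_vec_def)
      finally show ?thesis .
    qed
  qed (use \<open>\<forall>i\<in>S. 0 \<le> l i\<close> in auto)
qed

definition restricted_value ::
  "(real^'n \<Rightarrow> ereal) \<Rightarrow> (real^'m \<Rightarrow> ereal) \<Rightarrow> real^'n^'m \<Rightarrow> real^'n^'r \<Rightarrow> real^'r
     \<Rightarrow> 'r set \<Rightarrow> ereal" where
  "restricted_value f g A B b S = (INF x\<in>{x. \<forall>i\<in>S. (B *v x) $ i \<le> b $ i}. f x + g (A *v x))"

lemma restricted_value_finite: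
  assumes "\<forall>x. ereal c \<le> f x + g (A *v x)" and "\<forall>i\<in>S. (B *v x0) $ i \<le> b $ i"
    and "f x0 + g (A *v x0) < \<infinity>"
  shows "ereal (real_of_ereal (restricted_value f g A B b S)) = restricted_value f g A B b S"
proof -
  have "ereal c \<le> restricted_value f g A B b S" and "restricted_value f g A B b S \<le> f x0 + g (A *v x0)"
    unfolding restricted_value_def using assms(1,2) by (auto intro: INF_greatest INF_lower)
  with assms(3) show ?thesis
    by (cases "restricted_value f g A B b S") auto
qed

lemma restricted_weak_duality:
  assumes "proper_fun f" and "proper_fun g" and "\<forall>i. 0 \<le> z $ i" and "\<forall>i. i \<notin> S \<longrightarrow> z $ i = 0"
  shows "- restricted_value f g A B b S \<le> Xi_fun f g A B b y z"
proof -
  have "- Xi_fun f g A B b y z \<le> f x + g (A *v x)" if "\<forall>i\<in>S. (B *v x) $ i \<le> b $ i" for x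
    using weak_duality[OF assms that] by (subst ereal_uminus_le_reorder) blast
  then have "- Xi_fun f g A B b y z \<le> restricted_value f g A B b S"
    unfolding restricted_value_def by (auto intro: INF_greatest)
  then show ?thesis
    by (subst ereal_uminus_le_reorder)
qed

lemma restricted_dual_attained:
  assumes f: "proper_fun f" "convex_fun f" and g: "proper_fun g" "convex_fun g"
    and x0f: "x0 \<in> (if polyhedral_fun f then edom f else rel_interior (edom f))"
    and x0g: "A *v x0 \<in> (if polyhedral_fun g then edom g else rel_interior (edom g))"
    and x0B: "\<forall>i\<in>S. (B *v x0) $ i \<le> b $ i"
    and val_S: "restricted_value f g A B b S = ereal p"
  obtains y z where "\<forall>i. 0 \<le> z $ i" and "\<forall>i. i \<notin> S \<longrightarrow> z $ i = 0"
    and "Xi_fun f g A B b y z \<le> ereal (- p)"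
proof -
  have "ereal p \<le> f x + g (A *v x)" if "\<forall>i\<in>S. (B *v x) $ i \<le> b $ i" for x
    using that unfolding val_S[symmetric] restricted_value_def by (auto intro: INF_lower)
  then obtain y z where "\<forall>i. 0 \<le> z $ i" "\<forall>i. i \<notin> S \<longrightarrow> z $ i = 0"
    "\<And>x u. ereal p \<le> lagrangian f g A B b y z x u"
    using restricted_strong_duality[OF f g x0f x0g x0B] by metis
  with that show ?thesis
    using Xi_fun_le_if_lagrangian_ge[OF f(1) g(1)] by blast
qed

section \<open>The support penalty\<close>

lemma Psi_plus_nonneg:
  assumes "\<forall>i. 0 \<le> z $ i"
  shows "Psi_plus \<mu> z = ereal (\<Sum>i\<in>{i. z $ i \<noteq> 0}. \<mu> $ i)"
  using assms unfolding Psi_plus_def by (simp add: sum.If_cases)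

lemma Psi_plus_not_nonneg: "\<not> (\<forall>i. 0 \<le> z $ i) \<Longrightarrow> Psi_plus \<mu> z = \<infinity>"
  unfolding Psi_plus_def by simp

lemma Psi_plus_penalized_minimizer:
  fixes \<Phi> :: "'y \<Rightarrow> real^'r \<Rightarrow> ereal" and v :: "'r set \<Rightarrow> real"
  assumes attained: "\<And>S. \<exists>y z. (\<forall>i. 0 \<le> z $ i) \<and> (\<forall>i. i \<notin> S \<longrightarrow> z $ i = 0) \<and> \<Phi> y z \<le> ereal (- v S)"
    and lower: "\<And>S y z. \<forall>i. 0 \<le> z $ i \<Longrightarrow> \<forall>i. i \<notin> S \<longrightarrow> z $ i = 0 \<Longrightarrow> ereal (- v S) \<le> \<Phi> y z"
    and not_minf: "\<And>y z. \<Phi> y z \<noteq> -\<infinity>"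
    and \<mu>: "\<forall>i. 0 \<le> \<mu> $ i"
  shows "\<exists>y z. \<forall>y' z'. \<Phi> y z + Psi_plus \<mu> z \<le> \<Phi> y' z' + Psi_plus \<mu> z'"
proof -
  define cost where "cost S = (\<Sum>i\<in>S. \<mu> $ i) - v S" for S
  obtain S0 where S0: "\<And>S. cost S0 \<le> cost S"
    using ex_is_arg_min_if_finite[of "UNIV :: 'r set set" cost]
    unfolding is_arg_min_def by (auto simp: not_less)
  obtain y z where "\<forall>i. 0 \<le> z $ i" and supp: "\<forall>i. i \<notin> S0 \<longrightarrow> z $ i = 0"
    and "\<Phi> y z \<le> ereal (- v S0)"
    using attained by blast
  moreover have "(\<Sum>i\<in>{i. z $ i \<noteq> 0}. \<mu> $ i) \<le> (\<Sum>i\<in>S0. \<mu> $ i)"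
    using supp \<mu> by (intro sum_mono2) auto
  ultimately have "\<Phi> y z + Psi_plus \<mu> z \<le> ereal (- v S0) + ereal (\<Sum>i\<in>S0. \<mu> $ i)"
    unfolding Psi_plus_nonneg[OF \<open>\<forall>i. 0 \<le> z $ i\<close>] by (intro add_mono) simp_all
  then have opt: "\<Phi> y z + Psi_plus \<mu> z \<le> ereal (cost S0)"
    unfolding cost_def by simp
  have "\<Phi> y z + Psi_plus \<mu> z \<le> \<Phi> y' z' + Psi_plus \<mu> z'" for y' z'
  proof (cases "\<forall>i. 0 \<le> z' $ i")
    case True
    define S where "S = {i. z' $ i \<noteq> 0}"
    have "ereal (- v S) + ereal (\<Sum>i\<in>S. \<mu> $ i) \<le> \<Phi> y' z' + Psi_plus \<mu> z'"
      using lower[OF True, of S y'] unfolding Psi_plus_nonneg[OF True] S_def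
      by (intro add_mono) simp_all
    then have "ereal (cost S) \<le> \<Phi> y' z' + Psi_plus \<mu> z'"
      unfolding cost_def by simp
    with opt S0[of S] show ?thesis
      by (meson ereal_less_eq(3) order_trans)
  next
    case False
    then show ?thesis
      using not_minf[of y' z'] by (simp add: Psi_plus_not_nonneg)
  qed
  then show ?thesis
    by blast
qed

theorem mainTheorem5:
  fixes f :: "real^'n \<Rightarrow> ereal" and g :: "real^'m \<Rightarrow> ereal"
    and A :: "real^'n^'m" and B :: "real^'n^'r" and b :: "real^'r" and \<mu> :: "real^'r"
  assumes f_proper: "proper_fun f" and f_lsc: "lsc_fun f" and f_conv: "convex_fun f"
    and g_proper: "proper_fun g" and g_lsc: "lsc_fun g" and g_conv: "convex_fun g"
    and bdd: "\<exists>c::real. \<forall>x. ereal c \<le> f x + g (A *v x)"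
    and feas: "\<exists>x. x \<in> (if polyhedral_fun f then edom f else rel_interior (edom f))
                  \<and> A *v x \<in> (if polyhedral_fun g then edom g else rel_interior (edom g))
                  \<and> (\<forall>i. (B *v x) $ i \<le> b $ i)"
    and mu_pos: "\<forall>i. 0 < \<mu> $ i"
  shows "\<exists>y z. \<forall>y' z'. Xi_fun f g A B b y z + Psi_plus \<mu> z \<le> Xi_fun f g A B b y' z' + Psi_plus \<mu> z'"
proof -
  obtain x0 where x0f: "x0 \<in> (if polyhedral_fun f then edom f else rel_interior (edom f))"
    and x0g: "A *v x0 \<in> (if polyhedral_fun g then edom g else rel_interior (edom g))"
    and x0B: "\<forall>i. (B *v x0) $ i \<le> b $ i"
    using feas by blast
  obtain c :: real where c: "\<forall>x. ereal c \<le> f x + g (A *v x)"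
    using bdd by blast
  have x0_finite: "f x0 + g (A *v x0) < \<infinity>"
    using mem_edom_if_rel_interior[OF x0f] mem_edom_if_rel_interior[OF x0g]
    by (cases "f x0"; cases "g (A *v x0)") auto
  define v where "v S = real_of_ereal (restricted_value f g A B b S)" for S
  have v: "restricted_value f g A B b S = ereal (v S)" for S
    unfolding v_def by (rule restricted_value_finite[OF c _ x0_finite, symmetric]) (simp add: x0B)
  show ?thesis
  proof (rule Psi_plus_penalized_minimizer[of _ v])
    fix S
    show "\<exists>y z. (\<forall>i. 0 \<le> z $ i) \<and> (\<forall>i. i \<notin> S \<longrightarrow> z $ i = 0) \<and> Xi_fun f g A B b y z \<le> ereal (- v S)"
      using restricted_dual_attained[OF f_proper f_conv g_proper g_conv x0f x0g _ v] x0B by metis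
  next
    fix S and y :: "real^'m" and z :: "real^'r"
    assume "\<forall>i. 0 \<le> z $ i" and "\<forall>i. i \<notin> S \<longrightarrow> z $ i = 0"
    then show "ereal (- v S) \<le> Xi_fun f g A B b y z"
      using restricted_weak_duality[OF f_proper g_proper] v by (metis uminus_ereal.simps(1))
  qed (simp_all add: Xi_fun_not_minf[OF f_proper g_proper] mu_pos less_imp_le)
qed

end
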